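(* Let $f(x)=\mathbb{E}[F(x,\omega)]$ be $\tau$-strongly convex on $\mathbb{R}^n$ ($\tau>0$), and suppose: (a) for every $\omega\in\Omega$, $F(\cdot,\omega)$ is convex and continuously differentiable on $\mathbb{R}^n$, and $f$ is $C^1$ with $L$-Lipschitz continuous gradient; (b) for all $k\ge 0$, with $\bar w_{k,N_k}\triangleq \nabla f(x_k)-\frac{1}{N_k}\sum_{j=1}^{N_k}\nabla_x F(x_k,\omega_{j,k})$, there are $\nu_1,\nu_2>0$ with $\mathbb{E}[\|\bar w_{k,N_k}\|^2\mid\mathcal{F}_k]\le \frac{\nu_1^2\|x_k\|^2+\nu_2^2}{N_k}$ and $\mathbb{E}[\bar w_{k,N_k}\mid \mathcal{F}_k]=0$ almost surely; (c) every $H_k$ is $\mathcal{F}_k$-measurable, symmetric positive definite, and $\underline{\lambda}\mathbf{I}\preceq H_k\preceq\overline{\lambda}\mathbf{I}$ almost surely for all $k\ge0$, for constants $0<\underline{\lambda}\le\overline{\lambda}$. Let $\{x_k\}$ be generated by $x_{k+1}=x_k-\gamma_kH_k\frac{1}{N_k}\sum_{j=1}^{N_k}\nabla_xF(x_k,\omega_{j,k})$, where $\{N_k\}$ is an increasing sequence of positive integers with $N_0>\frac{2\nu_1^2\overline{\lambda}}{\tau^2\underline{\lambda}}$ and $\gamma_k=\frac{1}{L\overline{\lambda}}$ for all $k$. Then for all $k\ge1$, $$\mathbb{E}[f(x_{k+1})-f(x^* )]\le\Big(1-\frac{\tau\underline{\lambda}}{L\overline{\lambda}}+\frac{2\nu_1^2}{L\tau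 N_0}\Big)\mathbb{E}[f(x_k)-f(x^* )]+\frac{2\nu_1^2\|x^*\|^2+\nu_2^2}{2LN_k}.$$
   Context: $(\Omega,\mathcal{F},\mathbb{P})$ is a probability space, $\xi:\Omega\to\mathbb{R}^o$ a random vector, $F:\mathbb{R}^n\times\mathbb{R}^o\to\mathbb{R}$, and $F(x,\omega)$ abbreviates $F(x,\xi(\omega))$; the problem is $\min_{x\in\mathbb{R}^n}f(x)$ with (unique) minimizer $x^*$. At iteration $k$, $\omega_{1,k},\dots,\omega_{N_k,k}$ are the sampled realizations of $\omega$, $x_0\in\mathbb{R}^n$ is given, and $\mathcal{F}_k\triangleq\sigma\{x_0,x_1,\dots,x_{k-1}\}$. *)

theory Defs
  imports "HOL-Analysis.Analysis" "HOL-Probability.Probability"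
begin

definition strongly_convex_on :: "'a::real_normed_vector set \<Rightarrow> real \<Rightarrow> ('a \<Rightarrow> real) \<Rightarrow> bool" where
  "strongly_convex_on S \<tau> f \<longleftrightarrow>
     (\<forall>x\<in>S. \<forall>y\<in>S. \<forall>t\<in>{0..1::real}.
        f ((1 - t) *\<^sub>R x + t *\<^sub>R y) \<le> (1 - t) * f x + t * f y - \<tau> / 2 * t * (1 - t) * (norm (x - y))\<^sup>2)"

definition gen_sigma :: "'a measure \<Rightarrow> (nat \<Rightarrow> 'a \<Rightarrow> 'b::topological_space) \<Rightarrow> nat set \<Rightarrow> 'a measure" where
  "gen_sigma M X I = sigma (space M) (\<Union>i\<in>I. {X i -` A \<inter> space M | A. A \<in> sets borel})"

end

(*
  With step size 1/(L lam_hi), the descent lemma for the L-smooth f at the step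
  x - (1/(L lam_hi)) H (g - w), where g is the gradient and w the sampling error, gives
  f(x') <= f(x) - (g.Hg - w.Hw) / (2 L lam_hi): the cross term between g and w cancels exactly,
  and the quadratic term is controlled by |Hv|^2 <= lam_hi v.Hv.  Bounding g.Hg below by
  lam_lo |g|^2 >= 2 tau lam_lo (f(x) - f(xs)) (Polyak-Lojasiewicz) and w.Hw above by
  lam_hi |w|^2 yields, pointwise,
    f(x_{k+1}) - f(xs) <= (1 - tau lam_lo / (L lam_hi)) (f(x_k) - f(xs)) + |w_k|^2 / (2 L).
  In expectation, the tower property turns the conditional variance bound into
  E|w_k|^2 <= (nu1^2 E|x_k|^2 + nu2^2) / N_k, quadratic growth gives
  |x_k|^2 <= 4/tau (f(x_k) - f(xs)) + 2 |xs|^2, and N_0 <= N_k.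

  Since the cross term cancels pointwise, the noise need not have mean zero, the functions F
  enter only through w, and the lower bound on N_0 merely makes the contraction factor less
  than one; the inequality holds for every k, including k = 0.
*)
theory Submission
  imports Defs
begin

section \<open>Smooth strongly convex functions\<close>

lemma has_real_derivative_GDERIV_line:
  fixes f :: "'a::real_inner \<Rightarrow> real"
  assumes "\<And>x. GDERIV f x :> g x"
  shows "((\<lambda>t. f (x + t *\<^sub>R d)) has_real_derivative (g (x + t *\<^sub>R d) \<bullet> d)) (at t)"
proof -
  have outer: "(f has_derivative (\<lambda>h. h \<bullet> g (x + t *\<^sub>R d))) (at (x + t *\<^sub>R d))"
    using assms gderiv_def by blast
  have inner: "((\<lambda>t. x + t *\<^sub>R d) has_derivative (\<lambda>s. s *\<^sub>R d)) (at t)"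
    by (auto intro!: derivative_eq_intros)
  have "(\<lambda>s. (s *\<^sub>R d) \<bullet> g (x + t *\<^sub>R d)) = (*) (g (x + t *\<^sub>R d) \<bullet> d)"
    by (auto simp: fun_eq_iff inner_commute)
  then show ?thesis
    using has_derivative_compose[OF inner outer] by (simp add: has_field_derivative_def)
qed

lemma lipschitz_gradient_upper_bound:
  fixes f :: "'a::real_inner \<Rightarrow> real"
  assumes grad: "\<And>x. GDERIV f x :> g x"
    and lip: "\<And>x y. norm (g x - g y) \<le> L * norm (x - y)"
  shows "f y \<le> f x + g x \<bullet> (y - x) + L / 2 * (norm (y - x))\<^sup>2"
proof -
  define d where "d = y - x"
  define \<phi> where "\<phi> t = f (x + t *\<^sub>R d) - t * (g x \<bullet> d) - L / 2 * t\<^sup>2 * (norm d)\<^sup>2" for t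
  have "\<phi> 1 \<le> \<phi> 0"
  proof (rule DERIV_nonpos_imp_nonincreasing[of 0 1])
    fix t :: real assume t: "0 \<le> t" "t \<le> 1"
    have deriv: "(\<phi> has_real_derivative
        (g (x + t *\<^sub>R d) \<bullet> d - g x \<bullet> d - L / 2 * (2 * t) * (norm d)\<^sup>2)) (at t)"
      unfolding \<phi>_def
      by (rule derivative_eq_intros has_real_derivative_GDERIV_line[OF grad] refl | simp)+
    have "(g (x + t *\<^sub>R d) - g x) \<bullet> d \<le> norm (g (x + t *\<^sub>R d) - g x) * norm d"
      by (rule norm_cauchy_schwarz)
    also have "\<dots> \<le> L * norm (t *\<^sub>R d) * norm d"
      using lip[of "x + t *\<^sub>R d" x] by (intro mult_right_mono) auto
    also have "\<dots> = L * t * (norm d)\<^sup>2"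
      using t by (simp add: power2_eq_square)
    finally have "g (x + t *\<^sub>R d) \<bullet> d - g x \<bullet> d - L / 2 * (2 * t) * (norm d)\<^sup>2 \<le> 0"
      by (simp add: inner_diff_left)
    with deriv show "\<exists>y. (\<phi> has_real_derivative y) (at t) \<and> y \<le> 0"
      by blast
  qed simp
  then show ?thesis
    by (simp add: \<phi>_def d_def)
qed

text \<open>The strong convexity inequality at the points \<open>x + t (y - x)\<close>, divided by \<open>t\<close>, tends
  to the claim as \<open>t \<rightarrow> 0\<^sup>+\<close>.\<close>
lemma strongly_convex_gradient_lower_bound:
  fixes f :: "'a::real_inner \<Rightarrow> real"
  assumes grad: "\<And>x. GDERIV f x :> g x"
    and sc: "strongly_convex_on UNIV \<tau> f"
  shows "f x + g x \<bullet> (y - x) + \<tau> / 2 * (norm (y - x))\<^sup>2 \<le> f y"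
proof -
  define d where "d = y - x"
  define q where "q t = f y - f x - \<tau> / 2 * (1 - t) * (norm d)\<^sup>2" for t
  have deriv: "((\<lambda>t. f (x + t *\<^sub>R d)) has_real_derivative (g x \<bullet> d)) (at 0)"
    using has_real_derivative_GDERIV_line[OF grad, of x d 0] by simp
  have slope: "((\<lambda>t. (f (x + t *\<^sub>R d) - f x) / t) \<longlongrightarrow> g x \<bullet> d) (at_right 0)"
    using has_field_derivative_at_within[OF deriv, of "{0<..}"]
    unfolding has_field_derivative_iff by simp
  have "(q \<longlongrightarrow> q 0) (at_right 0)"
    unfolding q_def by (intro tendsto_intros)
  moreover have "eventually (\<lambda>t. (f (x + t *\<^sub>R d) - f x) / t \<le> q t) (at_right 0)"
    unfolding eventually_at_right[OF zero_less_one]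
  proof (intro exI[of _ 1] conjI allI impI)
    fix t :: real assume t: "0 < t" "t < 1"
    have "f ((1 - t) *\<^sub>R x + t *\<^sub>R y) \<le> (1 - t) * f x + t * f y - \<tau> / 2 * t * (1 - t) * (norm (x - y))\<^sup>2"
      using sc t unfolding strongly_convex_on_def by auto
    moreover have "(1 - t) *\<^sub>R x + t *\<^sub>R y = x + t *\<^sub>R d" "norm (x - y) = norm d"
      by (simp_all add: d_def algebra_simps norm_minus_commute)
    ultimately have "f (x + t *\<^sub>R d) - f x \<le> t * q t"
      by (simp add: q_def algebra_simps)
    then show "(f (x + t *\<^sub>R d) - f x) / t \<le> q t"
      using t by (simp add: divide_le_eq mult.commute)
  qed simp
  ultimately have "g x \<bullet> d \<le> q 0"
    using slope by (intro tendsto_le[of "at_right 0"]) auto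
  then show ?thesis
    by (simp add: q_def d_def)
qed

lemma strongly_convex_gradient_dominance:
  fixes f :: "'a::real_inner \<Rightarrow> real"
  assumes grad: "\<And>x. GDERIV f x :> g x"
    and sc: "strongly_convex_on UNIV \<tau> f" and "\<tau> > 0"
  shows "2 * \<tau> * (f x - f y) \<le> (norm (g x))\<^sup>2"
proof -
  let ?r = "norm (y - x)"
  have "- (norm (g x) * ?r) \<le> g x \<bullet> (y - x)"
    using norm_cauchy_schwarz[of "- g x" "y - x"] by simp
  then have "f x - f y \<le> norm (g x) * ?r - \<tau> / 2 * ?r\<^sup>2"
    using strongly_convex_gradient_lower_bound[OF grad sc, of x y] by simp
  then have "2 * \<tau> * (f x - f y) \<le> 2 * \<tau> * (norm (g x) * ?r - \<tau> / 2 * ?r\<^sup>2)"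
    using \<open>\<tau> > 0\<close> by simp
  also have "\<dots> = (norm (g x))\<^sup>2 - (norm (g x) - \<tau> * ?r)\<^sup>2"
    by (simp add: power2_eq_square algebra_simps)
  also have "\<dots> \<le> (norm (g x))\<^sup>2"
    by simp
  finally show ?thesis .
qed

lemma GDERIV_zero_at_minimum:
  fixes f :: "'a::real_inner \<Rightarrow> real"
  assumes "GDERIV f x :> g" and "\<And>y. f x \<le> f y"
  shows "g = 0"
proof -
  have "(\<lambda>h. h \<bullet> g) = (\<lambda>h. 0)"
    using assms by (intro differential_zero_maxmin[of x UNIV]) (auto simp: gderiv_def)
  then have "g \<bullet> g = 0"
    by meson
  then show ?thesis
    by simp
qed

lemma strongly_convex_norm_sq_bound:
  fixes f :: "'a::real_inner \<Rightarrow> real"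
  assumes grad: "\<And>x. GDERIV f x :> g x"
    and sc: "strongly_convex_on UNIV \<tau> f" and "\<tau> > 0"
    and min: "\<And>y. f xs \<le> f y"
  shows "(norm x)\<^sup>2 \<le> 4 / \<tau> * (f x - f xs) + 2 * (norm xs)\<^sup>2"
proof -
  have "g xs = 0"
    by (rule GDERIV_zero_at_minimum[OF grad min])
  then have growth: "\<tau> / 2 * (norm (x - xs))\<^sup>2 \<le> f x - f xs"
    using strongly_convex_gradient_lower_bound[OF grad sc, of xs x] by simp
  have "(norm x)\<^sup>2 \<le> (norm (x - xs) + norm xs)\<^sup>2"
    using norm_triangle_sub[of x xs] by (intro power_mono) (auto simp: add.commute)
  also have "\<dots> \<le> 2 * (norm (x - xs))\<^sup>2 + 2 * (norm xs)\<^sup>2"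
    using sum_squares_bound[of "norm (x - xs)" "norm xs"] unfolding power2_sum by linarith
  also have "\<dots> \<le> 4 / \<tau> * (f x - f xs) + 2 * (norm xs)\<^sup>2"
    using growth \<open>\<tau> > 0\<close> by (simp add: field_simps)
  finally show ?thesis .
qed

section \<open>Preconditioned gradient steps\<close>

lemma symmetric_matrix_inner_commute:
  fixes A :: "real^'n^'n"
  assumes "transpose A = A"
  shows "u \<bullet> (A *v w) = w \<bullet> (A *v u)"
proof -
  have "u \<bullet> (A *v w) = (transpose A *v u) \<bullet> w"
    by (simp add: dot_lmul_matrix vector_transpose_matrix)
  then show ?thesis
    using assms by (simp add: inner_commute)
qed

text \<open>The quadratic \<open>t \<mapsto> (u + t w) \<bullet> A (u + t w)\<close> is nonnegative, hence has nonpositive discriminant.\<close>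
lemma psd_matrix_cauchy_schwarz:
  fixes A :: "real^'n^'n"
  assumes sym: "transpose A = A" and psd: "\<And>v. 0 \<le> v \<bullet> (A *v v)"
  shows "(u \<bullet> (A *v w))\<^sup>2 \<le> (u \<bullet> (A *v u)) * (w \<bullet> (A *v w))"
proof -
  define a where "a = u \<bullet> (A *v u)"
  define b where "b = u \<bullet> (A *v w)"
  define c where "c = w \<bullet> (A *v w)"
  have quadratic: "0 \<le> a + 2 * t * b + t\<^sup>2 * c" for t
  proof -
    have "0 \<le> (u + t *\<^sub>R w) \<bullet> (A *v (u + t *\<^sub>R w))"
      using psd by blast
    also have "\<dots> = a + t * (u \<bullet> (A *v w)) + t * (w \<bullet> (A *v u)) + t\<^sup>2 * c"
      by (simp add: a_def c_def matrix_vector_right_distrib matrix_vector_mult_scaleR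
          inner_add_left inner_add_right power2_eq_square algebra_simps)
    finally show ?thesis
      using symmetric_matrix_inner_commute[OF sym, of w u] by (simp add: b_def algebra_simps)
  qed
  have "0 \<le> c"
    using psd c_def by blast
  show ?thesis
  proof (cases "c = 0")
    case True
    have "b = 0"
    proof (rule ccontr)
      assume "b \<noteq> 0"
      then show False
        using quadratic[of "- (a + 1) / (2 * b)"] True by (simp add: field_simps)
    qed
    then show ?thesis
      using True by (simp add: b_def c_def)
  next
    case False
    with \<open>0 \<le> c\<close> have "c > 0"
      by simp
    have "0 \<le> a + 2 * (- b / c) * b + (- b / c)\<^sup>2 * c"
      by (rule quadratic)
    also have "\<dots> = (a * c - b\<^sup>2) / c"
      using \<open>c > 0\<close> by (simp add: field_simps power2_eq_square)
    finally show ?thesis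
      using \<open>c > 0\<close> by (simp add: a_def b_def c_def zero_le_divide_iff)
  qed
qed

lemma psd_matrix_norm_mult_sq_le:
  fixes A :: "real^'n^'n"
  assumes sym: "transpose A = A" and psd: "\<And>v. 0 \<le> v \<bullet> (A *v v)"
    and upper: "\<And>v. v \<bullet> (A *v v) \<le> hi * (norm v)\<^sup>2"
  shows "(norm (A *v g))\<^sup>2 \<le> hi * (g \<bullet> (A *v g))"
proof (cases "A *v g = 0")
  case True
  then show ?thesis
    using psd upper by simp
next
  case False
  define u where "u = A *v g"
  have "(norm u)\<^sup>2 * (norm u)\<^sup>2 = (u \<bullet> (A *v g))\<^sup>2"
    by (simp add: u_def dot_square_norm power2_eq_square)
  also have "\<dots> \<le> (u \<bullet> (A *v u)) * (g \<bullet> (A *v g))"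
    by (rule psd_matrix_cauchy_schwarz[OF sym psd])
  also have "\<dots> \<le> (norm u)\<^sup>2 * (hi * (g \<bullet> (A *v g)))"
    using mult_right_mono[OF upper[of u] psd[of g]] by (simp add: mult_ac)
  finally have "(norm u)\<^sup>2 * (norm u)\<^sup>2 \<le> (norm u)\<^sup>2 * (hi * (g \<bullet> (A *v g)))" .
  moreover have "(norm u)\<^sup>2 > 0"
    using False by (simp add: u_def)
  ultimately show ?thesis
    unfolding u_def using mult_le_cancel_left_pos by blast
qed

lemma preconditioned_step_descent:
  fixes f :: "real^'n \<Rightarrow> real" and A :: "real^'n^'n"
  assumes grad: "\<And>x. GDERIV f x :> g x"
    and lip: "\<And>x y. norm (g x - g y) \<le> L * norm (x - y)" and "L > 0" "hi > 0"
    and sym: "transpose A = A" and psd: "\<And>v. 0 \<le> v \<bullet> (A *v v)"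
    and upper: "\<And>v. v \<bullet> (A *v v) \<le> hi * (norm v)\<^sup>2"
  shows "f (x - (1 / (L * hi)) *\<^sub>R (A *v (g x - w)))
    \<le> f x - (g x \<bullet> (A *v g x) - w \<bullet> (A *v w)) / (2 * L * hi)"
proof -
  define c where "c = 1 / (L * hi)"
  define G where "G = g x"
  define v where "v = G - w"
  have "f (x - c *\<^sub>R (A *v v)) \<le> f x - c * (G \<bullet> (A *v v)) + L / 2 * c\<^sup>2 * (norm (A *v v))\<^sup>2"
    using lipschitz_gradient_upper_bound[OF grad lip, where x = x and y = "x - c *\<^sub>R (A *v v)"]
    by (simp add: G_def power_mult_distrib)
  also have "L / 2 * c\<^sup>2 * (norm (A *v v))\<^sup>2 \<le> L / 2 * c\<^sup>2 * (hi * (v \<bullet> (A *v v)))"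
    using psd_matrix_norm_mult_sq_le[OF sym psd upper, of v] \<open>L > 0\<close> by (intro mult_left_mono) auto
  also have "L / 2 * c\<^sup>2 * (hi * (v \<bullet> (A *v v))) = c / 2 * (v \<bullet> (A *v v))"
    using \<open>L > 0\<close> \<open>hi > 0\<close> by (simp add: c_def power2_eq_square field_simps)
  also have "f x - c * (G \<bullet> (A *v v)) + c / 2 * (v \<bullet> (A *v v))
      = f x - c / 2 * (G \<bullet> (A *v G) - w \<bullet> (A *v w))"
    using symmetric_matrix_inner_commute[OF sym, of w G]
    by (simp add: v_def matrix_vector_mult_diff_distrib inner_diff_left inner_diff_right
        algebra_simps)
  finally show ?thesis
    by (simp add: c_def G_def v_def)
qed

lemma preconditioned_step_gap_bound:
  fixes f :: "real^'n \<Rightarrow> real" and A :: "real^'n^'n"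
  assumes grad: "\<And>x. GDERIV f x :> g x"
    and lip: "\<And>x y. norm (g x - g y) \<le> L * norm (x - y)"
    and sc: "strongly_convex_on UNIV \<tau> f" and "\<tau> > 0" "L > 0"
    and sym: "transpose A = A"
    and bounds: "\<And>v. lo * (norm v)\<^sup>2 \<le> v \<bullet> (A *v v)" "\<And>v. v \<bullet> (A *v v) \<le> hi * (norm v)\<^sup>2"
    and "0 < lo" "lo \<le> hi"
  shows "f (x - (1 / (L * hi)) *\<^sub>R (A *v (g x - w))) - f y
     \<le> (1 - \<tau> * lo / (L * hi)) * (f x - f y) + (norm w)\<^sup>2 / (2 * L)"
proof -
  have "hi > 0"
    using \<open>0 < lo\<close> \<open>lo \<le> hi\<close> by simp
  have psd: "\<And>v. 0 \<le> v \<bullet> (A *v v)"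
    using bounds \<open>0 < lo\<close> by (meson order_trans zero_le_mult_iff zero_le_power2 less_imp_le)
  have "f (x - (1 / (L * hi)) *\<^sub>R (A *v (g x - w)))
      \<le> f x - (g x \<bullet> (A *v g x) - w \<bullet> (A *v w)) / (2 * L * hi)"
    using bounds \<open>L > 0\<close> \<open>hi > 0\<close>
    by (intro preconditioned_step_descent[OF grad lip _ _ sym psd]) auto
  also have "\<dots> \<le> f x - (lo * (norm (g x))\<^sup>2 - hi * (norm w)\<^sup>2) / (2 * L * hi)"
    using bounds \<open>L > 0\<close> \<open>hi > 0\<close> by (intro diff_left_mono divide_right_mono diff_mono) auto
  also have "\<dots> = f x - lo / (2 * L * hi) * (norm (g x))\<^sup>2 + (norm w)\<^sup>2 / (2 * L)"
    using \<open>L > 0\<close> \<open>hi > 0\<close> by (simp add: field_simps)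
  also have "\<dots> \<le> f x - lo / (2 * L * hi) * (2 * \<tau> * (f x - f y)) + (norm w)\<^sup>2 / (2 * L)"
    using strongly_convex_gradient_dominance[OF grad sc \<open>\<tau> > 0\<close>, of x y] \<open>0 < lo\<close> \<open>L > 0\<close> \<open>hi > 0\<close>
    by (intro add_right_mono diff_left_mono mult_left_mono) auto
  finally show ?thesis
    using \<open>L > 0\<close> \<open>hi > 0\<close> by (simp add: field_simps)
qed

section \<open>Measurability and conditional expectations\<close>

lemma borel_measurable_vec_nth [measurable (raw)]:
  fixes g :: "'a \<Rightarrow> 'b::real_normed_vector^'n"
  assumes "g \<in> borel_measurable M"
  shows "(\<lambda>x. g x $ i) \<in> borel_measurable M"
  using linear_continuous_on[OF bounded_linear_vec_nth] assms
  by (rule borel_measurable_continuous_on)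

lemma borel_measurable_vec_lambda:
  fixes g :: "'a \<Rightarrow> real^'n"
  assumes "\<And>i. (\<lambda>x. g x $ i) \<in> borel_measurable M"
  shows "g \<in> borel_measurable M"
  by (subst borel_measurable_euclidean_space) (auto simp: Basis_vec_def inner_axis assms)

lemma borel_measurable_matrix_vector_mult:
  fixes A :: "'a \<Rightarrow> real^'n^'m" and v :: "'a \<Rightarrow> real^'n"
  assumes "A \<in> borel_measurable M" "v \<in> borel_measurable M"
  shows "(\<lambda>x. A x *v v x) \<in> borel_measurable M"
proof (rule borel_measurable_vec_lambda)
  fix i
  have "(\<lambda>x. \<Sum>j\<in>UNIV. A x $ i $ j * v x $ j) \<in> borel_measurable M"
    using assms by measurable
  then show "(\<lambda>x. (A x *v v x) $ i) \<in> borel_measurable M"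
    by (simp add: matrix_vector_mult_def)
qed

lemma subalgebra_gen_sigma:
  assumes "\<And>i. i \<in> I \<Longrightarrow> X i \<in> borel_measurable M"
  shows "subalgebra M (gen_sigma M X I)"
proof -
  have gen: "(\<Union>i\<in>I. {X i -` A \<inter> space M | A. A \<in> sets borel}) \<subseteq> Pow (space M)"
    by auto
  moreover have "(\<Union>i\<in>I. {X i -` A \<inter> space M | A. A \<in> sets borel}) \<subseteq> sets M"
    using assms by (auto simp: measurable_def)
  ultimately show ?thesis
    unfolding subalgebra_def gen_sigma_def using sigma_le_sets[OF gen, of M] by simp
qed

lemma (in prob_space) integral_le_if_nn_cond_exp_le:
  assumes "subalgebra M F"
    and Y: "Y \<in> borel_measurable M" "\<And>x. 0 \<le> Y x"
    and B: "integrable M B" "\<And>x. 0 \<le> B x"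
    and le: "AE x in M. nn_cond_exp M F (\<lambda>x. ennreal (Y x)) x \<le> ennreal (B x)"
  shows "integrable M Y" "(\<integral>x. Y x \<partial>M) \<le> (\<integral>x. B x \<partial>M)"
proof -
  interpret sigma_finite_subalgebra M F
    using \<open>subalgebra M F\<close> finite_measure_axioms
    by (intro finite_measure_subalgebra_is_sigma_finite)
      (simp add: finite_measure_subalgebra_def finite_measure_subalgebra_axioms_def)
  have "(\<integral>\<^sup>+x. ennreal (Y x) \<partial>M) = (\<integral>\<^sup>+x. nn_cond_exp M F (\<lambda>x. ennreal (Y x)) x \<partial>M)"
    using nn_cond_exp_intg[of "\<lambda>_. 1" "\<lambda>x. ennreal (Y x)"] Y by simp
  also have "\<dots> \<le> (\<integral>\<^sup>+x. ennreal (B x) \<partial>M)"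
    using le by (rule nn_integral_mono_AE)
  also have "\<dots> = ennreal (\<integral>x. B x \<partial>M)"
    using B by (intro nn_integral_eq_integral) auto
  finally have nn_le: "(\<integral>\<^sup>+x. ennreal (Y x) \<partial>M) \<le> ennreal (\<integral>x. B x \<partial>M)" .
  then show int_Y: "integrable M Y"
    using Y by (intro integrableI_nonneg) (auto simp: le_less_trans)
  have "ennreal (\<integral>x. Y x \<partial>M) \<le> ennreal (\<integral>x. B x \<partial>M)"
    using nn_le int_Y Y by (simp add: nn_integral_eq_integral)
  moreover have "0 \<le> (\<integral>x. B x \<partial>M)"
    using B by (simp add: integral_nonneg_AE)
  ultimately show "(\<integral>x. Y x \<partial>M) \<le> (\<integral>x. B x \<partial>M)"
    by (simp add: ennreal_le_iff)
qed

section \<open>The preconditioned stochastic gradient iteration\<close>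

text \<open>\<open>w k\<close> is the sampling error \<open>\<nabla>f(x\<^sub>k) - (1/N\<^sub>k) \<Sum>\<^sub>j \<nabla>\<^sub>xF(x\<^sub>k, \<omega>\<^bsub>j,k\<^esub>)\<close>, so that
  the iteration steps along \<open>H\<^sub>k (\<nabla>f(x\<^sub>k) - w\<^sub>k)\<close>.\<close>
locale preconditioned_sgd = prob_space M
  for M :: "'a measure"
    and f :: "real^'n \<Rightarrow> real" and gradf :: "real^'n \<Rightarrow> real^'n" and xs x0 :: "real^'n"
    and X :: "nat \<Rightarrow> 'a \<Rightarrow> real^'n" and H :: "nat \<Rightarrow> 'a \<Rightarrow> real^'n^'n"
    and w :: "nat \<Rightarrow> 'a \<Rightarrow> real^'n" and N :: "nat \<Rightarrow> nat"
    and \<tau> L \<nu>1 \<nu>2 lo hi :: real +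
  assumes grad: "\<And>x. GDERIV f x :> gradf x"
    and lipschitz: "\<And>x y. norm (gradf x - gradf y) \<le> L * norm (x - y)"
    and strongly_convex: "strongly_convex_on UNIV \<tau> f"
    and tau_pos: "\<tau> > 0" and L_pos: "L > 0"
    and minimizer: "\<And>x. f xs \<le> f x"
    and N_pos: "\<And>k. N k > 0" and N_mono: "mono N"
    and lo_pos: "0 < lo" and lo_le_hi: "lo \<le> hi"
    and X_0: "\<And>\<omega>. \<omega> \<in> space M \<Longrightarrow> X 0 \<omega> = x0"
    and X_Suc: "\<And>k \<omega>. \<omega> \<in> space M \<Longrightarrow>
      X (Suc k) \<omega> = X k \<omega> - (1 / (L * hi)) *\<^sub>R (H k \<omega> *v (gradf (X k \<omega>) - w k \<omega>))"
    and noise_measurable: "\<And>k. w k \<in> borel_measurable M"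
    and H_measurable: "\<And>k. H k \<in> borel_measurable (gen_sigma M X {..k - 1})"
    and H_symmetric: "\<And>k \<omega>. \<omega> \<in> space M \<Longrightarrow> transpose (H k \<omega>) = H k \<omega>"
    and H_bounds: "\<And>k. AE \<omega> in M. \<forall>v.
      lo * (norm v)\<^sup>2 \<le> v \<bullet> (H k \<omega> *v v) \<and> v \<bullet> (H k \<omega> *v v) \<le> hi * (norm v)\<^sup>2"
    and noise_variance: "\<And>k. AE \<omega> in M.
      nn_cond_exp M (gen_sigma M X {..k - 1}) (\<lambda>\<omega>. ennreal ((norm (w k \<omega>))\<^sup>2)) \<omega>
        \<le> ennreal ((\<nu>1\<^sup>2 * (norm (X k \<omega>))\<^sup>2 + \<nu>2\<^sup>2) / real (N k))"
begin

definition optimality_gap :: "nat \<Rightarrow> 'a \<Rightarrow> real" where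
  "optimality_gap k \<omega> = f (X k \<omega>) - f xs"

lemma optimality_gap_nonneg: "0 \<le> optimality_gap k \<omega>"
  using minimizer by (simp add: optimality_gap_def)

lemma X_measurable: "X k \<in> borel_measurable M"
proof (induction k rule: less_induct)
  case (less k)
  show ?case
  proof (cases k)
    case 0
    then show ?thesis
      using X_0 measurable_cong[of M "X 0" "\<lambda>_. x0"] by simp
  next
    case (Suc j)
    have "subalgebra M (gen_sigma M X {..j - 1})"
      using less Suc by (intro subalgebra_gen_sigma) auto
    then have H_j: "H j \<in> borel_measurable M"
      using H_measurable[of j] by (rule measurable_from_subalg)
    have "continuous_on UNIV gradf"
      using lipschitz L_pos
      by (intro lipschitz_on_continuous_on[of L]) (auto simp: lipschitz_on_def dist_norm)
    moreover have X_j: "X j \<in> borel_measurable M"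
      using less Suc by simp
    ultimately have "(\<lambda>\<omega>. gradf (X j \<omega>)) \<in> borel_measurable M"
      by (rule borel_measurable_continuous_on)
    then have "(\<lambda>\<omega>. X j \<omega> - (1 / (L * hi)) *\<^sub>R (H j \<omega> *v (gradf (X j \<omega>) - w j \<omega>)))
        \<in> borel_measurable M"
      using X_j H_j noise_measurable[of j]
      by (intro borel_measurable_diff borel_measurable_scaleR borel_measurable_matrix_vector_mult)
        auto
    then show ?thesis
      using X_Suc measurable_cong[of M "X (Suc j)"] Suc by simp
  qed
qed

lemma optimality_gap_measurable: "optimality_gap k \<in> borel_measurable M"
proof -
  have "continuous_on UNIV f"
    using grad
    by (intro continuous_at_imp_continuous_on) (auto intro: has_derivative_continuous simp: gderiv_def)
  then have "(\<lambda>\<omega>. f (X k \<omega>)) \<in> borel_measurable M"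
    using X_measurable by (rule borel_measurable_continuous_on)
  then show ?thesis
    unfolding optimality_gap_def by simp
qed

lemma optimality_gap_step:
  "AE \<omega> in M. optimality_gap (Suc k) \<omega>
     \<le> (1 - \<tau> * lo / (L * hi)) * optimality_gap k \<omega> + (norm (w k \<omega>))\<^sup>2 / (2 * L)"
  using H_bounds[of k] AE_space
proof eventually_elim
  case (elim \<omega>)
  then show ?case
    using preconditioned_step_gap_bound[OF grad lipschitz strongly_convex tau_pos L_pos
        H_symmetric _ _ lo_pos lo_le_hi, of \<omega> k "X k \<omega>" "w k \<omega>" xs]
    by (simp add: optimality_gap_def X_Suc)
qed

lemma noise_second_moment:
  assumes "integrable M (optimality_gap k)"
  shows "integrable M (\<lambda>\<omega>. (norm (w k \<omega>))\<^sup>2)"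
    and "(\<integral>\<omega>. (norm (w k \<omega>))\<^sup>2 \<partial>M) \<le> (4 * \<nu>1\<^sup>2 / \<tau> * (\<integral>\<omega>. optimality_gap k \<omega> \<partial>M)
      + 2 * \<nu>1\<^sup>2 * (norm xs)\<^sup>2 + \<nu>2\<^sup>2) / real (N k)"
proof -
  define B where "B \<omega> = (4 * \<nu>1\<^sup>2 / \<tau> * optimality_gap k \<omega> + 2 * \<nu>1\<^sup>2 * (norm xs)\<^sup>2 + \<nu>2\<^sup>2)
    / real (N k)" for \<omega>
  have bound: "(\<nu>1\<^sup>2 * (norm (X k \<omega>))\<^sup>2 + \<nu>2\<^sup>2) / real (N k) \<le> B \<omega>" for \<omega>
  proof -
    have "(norm (X k \<omega>))\<^sup>2 \<le> 4 / \<tau> * optimality_gap k \<omega> + 2 * (norm xs)\<^sup>2"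
      unfolding optimality_gap_def
      by (rule strongly_convex_norm_sq_bound[OF grad strongly_convex tau_pos minimizer])
    then have "\<nu>1\<^sup>2 * (norm (X k \<omega>))\<^sup>2 \<le> \<nu>1\<^sup>2 * (4 / \<tau> * optimality_gap k \<omega> + 2 * (norm xs)\<^sup>2)"
      by (simp add: mult_left_mono)
    then show ?thesis
      unfolding B_def using N_pos[of k] by (intro divide_right_mono) (auto simp: algebra_simps)
  qed
  have "AE \<omega> in M. nn_cond_exp M (gen_sigma M X {..k - 1}) (\<lambda>\<omega>. ennreal ((norm (w k \<omega>))\<^sup>2)) \<omega>
      \<le> ennreal (B \<omega>)"
    using noise_variance[of k]
  proof eventually_elim
    case (elim \<omega>)
    then show ?case
      using bound[of \<omega>] by (meson ennreal_leI order_trans)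
  qed
  moreover have "subalgebra M (gen_sigma M X {..k - 1})"
    using X_measurable by (intro subalgebra_gen_sigma)
  moreover have "(\<lambda>\<omega>. (norm (w k \<omega>))\<^sup>2) \<in> borel_measurable M"
    using noise_measurable[of k] by measurable
  moreover have "integrable M B"
    unfolding B_def using assms by simp
  moreover have "0 \<le> B \<omega>" for \<omega>
    unfolding B_def using optimality_gap_nonneg[of k \<omega>] tau_pos by simp
  ultimately have "integrable M (\<lambda>\<omega>. (norm (w k \<omega>))\<^sup>2)"
    and moment: "(\<integral>\<omega>. (norm (w k \<omega>))\<^sup>2 \<partial>M) \<le> (\<integral>\<omega>. B \<omega> \<partial>M)"
    by (auto intro: integral_le_if_nn_cond_exp_le)
  moreover have "(\<integral>\<omega>. B \<omega> \<partial>M) = (4 * \<nu>1\<^sup>2 / \<tau> * (\<integral>\<omega>. optimality_gap k \<omega> \<partial>M)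
      + 2 * \<nu>1\<^sup>2 * (norm xs)\<^sup>2 + \<nu>2\<^sup>2) / real (N k)"
    unfolding B_def using assms by (simp add: prob_space)
  ultimately show "integrable M (\<lambda>\<omega>. (norm (w k \<omega>))\<^sup>2)"
    and "(\<integral>\<omega>. (norm (w k \<omega>))\<^sup>2 \<partial>M) \<le> (4 * \<nu>1\<^sup>2 / \<tau> * (\<integral>\<omega>. optimality_gap k \<omega> \<partial>M)
      + 2 * \<nu>1\<^sup>2 * (norm xs)\<^sup>2 + \<nu>2\<^sup>2) / real (N k)"
    by simp_all
qed

lemma optimality_gap_integrable: "integrable M (optimality_gap k)"
proof (induction k)
  case 0
  show ?case
    by (subst Bochner_Integration.integrable_cong[of M M _ "\<lambda>_. f x0 - f xs"])
      (auto simp: optimality_gap_def X_0)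
next
  case (Suc k)
  have "integrable M (\<lambda>\<omega>. (1 - \<tau> * lo / (L * hi)) * optimality_gap k \<omega> + (norm (w k \<omega>))\<^sup>2 / (2 * L))"
    using Suc.IH noise_second_moment(1)[OF Suc.IH] by simp
  moreover have "AE \<omega> in M. norm (optimality_gap (Suc k) \<omega>)
      \<le> norm ((1 - \<tau> * lo / (L * hi)) * optimality_gap k \<omega> + (norm (w k \<omega>))\<^sup>2 / (2 * L))"
    using optimality_gap_step[of k]
  proof eventually_elim
    case (elim \<omega>)
    then show ?case
      using optimality_gap_nonneg[of "Suc k" \<omega>] unfolding real_norm_def by linarith
  qed
  ultimately show ?case
    by (rule Bochner_Integration.integrable_bound[OF _ optimality_gap_measurable])
qed

lemma expected_optimality_gap_step:
  "(\<integral>\<omega>. optimality_gap (Suc k) \<omega> \<partial>M)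
     \<le> (1 - \<tau> * lo / (L * hi) + 2 * \<nu>1\<^sup>2 / (L * \<tau> * real (N 0))) * (\<integral>\<omega>. optimality_gap k \<omega> \<partial>M)
       + (2 * \<nu>1\<^sup>2 * (norm xs)\<^sup>2 + \<nu>2\<^sup>2) / (2 * L * real (N k))"
proof -
  let ?\<rho> = "1 - \<tau> * lo / (L * hi)"
  let ?G = "\<integral>\<omega>. optimality_gap k \<omega> \<partial>M"
  let ?W = "\<integral>\<omega>. (norm (w k \<omega>))\<^sup>2 \<partial>M"
  let ?c = "2 * \<nu>1\<^sup>2 * (norm xs)\<^sup>2 + \<nu>2\<^sup>2"
  have "0 \<le> ?G"
    using optimality_gap_nonneg by (simp add: integral_nonneg_AE)
  have "real (N 0) > 0" "real (N 0) \<le> real (N k)"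
    using N_pos N_mono by (auto simp: mono_def)
  have "(\<integral>\<omega>. optimality_gap (Suc k) \<omega> \<partial>M)
      \<le> (\<integral>\<omega>. ?\<rho> * optimality_gap k \<omega> + (norm (w k \<omega>))\<^sup>2 / (2 * L) \<partial>M)"
    using optimality_gap_integrable noise_second_moment(1) optimality_gap_step
    by (intro integral_mono_AE) auto
  also have "\<dots> = ?\<rho> * ?G + ?W / (2 * L)"
    using optimality_gap_integrable noise_second_moment(1) by simp
  also have "?W / (2 * L) \<le> (4 * \<nu>1\<^sup>2 / \<tau> * ?G + ?c) / real (N k) / (2 * L)"
    using divide_right_mono[OF noise_second_moment(2)[OF optimality_gap_integrable], of "2 * L"] L_pos
    by (simp add: add.assoc)
  also have "\<dots> = 2 * \<nu>1\<^sup>2 / (L * \<tau> * real (N k)) * ?G + ?c / (2 * L * real (N k))"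
    using L_pos tau_pos N_pos[of k] by (simp add: field_simps)
  also have "2 * \<nu>1\<^sup>2 / (L * \<tau> * real (N k)) * ?G \<le> 2 * \<nu>1\<^sup>2 / (L * \<tau> * real (N 0)) * ?G"
    using \<open>0 \<le> ?G\<close> \<open>real (N 0) > 0\<close> \<open>real (N 0) \<le> real (N k)\<close> L_pos tau_pos
    by (intro mult_right_mono divide_left_mono mult_left_mono mult_pos_pos) auto
  finally show ?thesis
    by (simp add: algebra_simps)
qed

end

theorem mainTheorem1:
  fixes M :: "'a measure"
    and \<xi> :: "'a \<Rightarrow> real^'m"
    and F :: "real^'n \<Rightarrow> real^'m \<Rightarrow> real"
    and gradF :: "real^'n \<Rightarrow> real^'m \<Rightarrow> real^'n"
    and f :: "real^'n \<Rightarrow> real"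
    and gradf :: "real^'n \<Rightarrow> real^'n"
    and xs x0 :: "real^'n"
    and om :: "nat \<Rightarrow> nat \<Rightarrow> 'a \<Rightarrow> 'a"
    and N :: "nat \<Rightarrow> nat"
    and H :: "nat \<Rightarrow> 'a \<Rightarrow> real^'n^'n"
    and X :: "nat \<Rightarrow> 'a \<Rightarrow> real^'n"
    and \<tau> L \<nu>1 \<nu>2 lam_lo lam_hi \<gamma> :: real
  assumes prob: "prob_space M"
    and xi_meas: "\<xi> \<in> borel_measurable M"
    and F_int: "\<forall>x. integrable M (\<lambda>\<omega>. F x (\<xi> \<omega>))"
    and f_def: "\<forall>x. f x = (\<integral>\<omega>. F x (\<xi> \<omega>) \<partial>M)"
    and tau_pos: "\<tau> > 0"
    and f_strong: "strongly_convex_on UNIV \<tau> f"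
    and xs_min: "\<forall>x. f xs \<le> f x"
    \<comment> \<open>(a)\<close>
    and F_convex: "\<forall>\<omega>\<in>space M. convex_on UNIV (\<lambda>z. F z (\<xi> \<omega>))"
    and F_grad: "\<forall>\<omega>\<in>space M. \<forall>x. GDERIV (\<lambda>z. F z (\<xi> \<omega>)) x :> gradF x (\<xi> \<omega>)"
    and F_C1: "\<forall>\<omega>\<in>space M. continuous_on UNIV (\<lambda>x. gradF x (\<xi> \<omega>))"
    and f_grad: "\<forall>x. GDERIV f x :> gradf x"
    and f_C1: "continuous_on UNIV gradf"
    and L_pos: "L > 0"
    and f_Lip: "\<forall>x y. norm (gradf x - gradf y) \<le> L * norm (x - y)"
    \<comment> \<open>samples and sample sizes\<close>
    and om_meas: "\<forall>j k. om j k \<in> measurable M M"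
    and N_pos: "\<forall>k. N k > 0"
    and N_mono: "mono N"
    and N0: "real (N 0) > 2 * \<nu>1\<^sup>2 * lam_hi / (\<tau>\<^sup>2 * lam_lo)"
    \<comment> \<open>iteration\<close>
    and gamma: "\<gamma> = 1 / (L * lam_hi)"
    and X0: "\<forall>\<omega>\<in>space M. X 0 \<omega> = x0"
    and X_step: "\<forall>k. \<forall>\<omega>\<in>space M. X (Suc k) \<omega> = X k \<omega> - \<gamma> *\<^sub>R (H k \<omega> *v
          ((1 / real (N k)) *\<^sub>R (\<Sum>j\<in>{1..N k}. gradF (X k \<omega>) (\<xi> (om j k \<omega>)))))"
    \<comment> \<open>(b)\<close>
    and nu_pos: "\<nu>1 > 0" "\<nu>2 > 0"
    and noise_var: "\<forall>k. AE \<omega> in M.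
          nn_cond_exp M (gen_sigma M X {..k - 1})
            (\<lambda>\<omega>. ennreal ((norm (gradf (X k \<omega>) - (1 / real (N k)) *\<^sub>R
                 (\<Sum>j\<in>{1..N k}. gradF (X k \<omega>) (\<xi> (om j k \<omega>)))))\<^sup>2)) \<omega>
          \<le> ennreal ((\<nu>1\<^sup>2 * (norm (X k \<omega>))\<^sup>2 + \<nu>2\<^sup>2) / real (N k))"
    and noise_int: "\<forall>k i. integrable M (\<lambda>\<omega>. (gradf (X k \<omega>) - (1 / real (N k)) *\<^sub>R
                 (\<Sum>j\<in>{1..N k}. gradF (X k \<omega>) (\<xi> (om j k \<omega>)))) $ i)"
    and noise_mean: "\<forall>k i. AE \<omega> in M.
          real_cond_exp M (gen_sigma M X {..k - 1})
            (\<lambda>\<omega>. (gradf (X k \<omega>) - (1 / real (N k)) *\<^sub>R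
                 (\<Sum>j\<in>{1..N k}. gradF (X k \<omega>) (\<xi> (om j k \<omega>)))) $ i) \<omega> = 0"
    \<comment> \<open>(c)\<close>
    and lam_pos: "0 < lam_lo" "lam_lo \<le> lam_hi"
    and H_meas: "\<forall>k. H k \<in> borel_measurable (gen_sigma M X {..k - 1})"
    and H_spd: "\<forall>k. \<forall>\<omega>\<in>space M. transpose (H k \<omega>) = H k \<omega> \<and>
          (\<forall>v. v \<noteq> 0 \<longrightarrow> v \<bullet> (H k \<omega> *v v) > 0)"
    and H_bounds: "\<forall>k. AE \<omega> in M. \<forall>v.
          lam_lo * (norm v)\<^sup>2 \<le> v \<bullet> (H k \<omega> *v v) \<and> v \<bullet> (H k \<omega> *v v) \<le> lam_hi * (norm v)\<^sup>2"
  shows "\<forall>k\<ge>1. (\<integral>\<omega>. f (X (Suc k) \<omega>) - f xs \<partial>M)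
           \<le> (1 - \<tau> * lam_lo / (L * lam_hi) + 2 * \<nu>1\<^sup>2 / (L * \<tau> * real (N 0)))
               * (\<integral>\<omega>. f (X k \<omega>) - f xs \<partial>M)
             + (2 * \<nu>1\<^sup>2 * (norm xs)\<^sup>2 + \<nu>2\<^sup>2) / (2 * L * real (N k))"
proof -
  define w where "w k \<omega> = gradf (X k \<omega>) - (1 / real (N k)) *\<^sub>R
    (\<Sum>j\<in>{1..N k}. gradF (X k \<omega>) (\<xi> (om j k \<omega>)))" for k \<omega>
  have "w k \<in> borel_measurable M" for k
    using noise_int by (intro borel_measurable_vec_lambda borel_measurable_integrable) (simp add: w_def)
  then interpret preconditioned_sgd M f gradf xs x0 X H w N \<tau> L \<nu>1 \<nu>2 lam_lo lam_hi
    using f_grad f_Lip f_strong tau_pos L_pos xs_min N_pos N_mono lam_pos X0 X_step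
      H_meas H_spd H_bounds noise_var
    by (intro preconditioned_sgd.intro preconditioned_sgd_axioms.intro prob) (simp_all add: w_def gamma)
  show ?thesis
    using expected_optimality_gap_step by (simp add: optimality_gap_def)
qed

end
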